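(* Let $m\ge2$ be even, $l\ge1$, and $V$ a finite-dimensional $\mathbb{K}$-vector space with ordered basis $(e_i)_{i\in B}$. Then $\mathrm{HPf}^{(m,l)}(V)\subseteq\mathrm{HPf}^{(m,l+1)}(V)$.
   Context: For $x\in\bigwedge^mV$ write $x=\sum_Ix_Ie_I$, where $e_I=e_{i_1}\wedge\dots\wedge e_{i_m}$ for $I=\{i_1<\dots<i_m\}\subseteq B$. For $A\subseteq B$ with $|A|=mk$, the hyper-Pfaffian form is $\mathrm{hpf}^{(m,k)}_A(x)=\sum\mathrm{sgn}(I_1,\dots,I_k)x_{I_1}\cdots x_{I_k}$, summed over unordered partitions $A=I_1\sqcup\dots\sqcup I_k$ into $m$-sets, where $\mathrm{sgn}(I_1,\dots,I_k)$ is the sign of the permutation of $A$ whose one-line form lists $I_1,\dots,I_k$ successively, each in increasing order. $\mathrm{HPf}^{(m,k)}(V)=\{x\in\bigwedge^mV:\mathrm{hpf}^{(m,k)}_A(x)=0\ \forall A\subseteq B,|A|=mk\}$. *)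

theory Defs
  imports "HOL-Combinatorics.Permutations"
begin

text \<open>Vectors of the m-th exterior power of V, with respect to the basis (e_i) indexed by
  the finite linearly ordered set B, are represented by their coordinate functions
  x :: 'b set => 'k, x I being the coefficient of e_I for an m-subset I of B.\<close>

definition ext_power :: "nat \<Rightarrow> 'b set \<Rightarrow> ('b set \<Rightarrow> 'k::field) set" where
  "ext_power m B = {x. \<forall>I. \<not> (I \<subseteq> B \<and> card I = m) \<longrightarrow> x I = 0}"

text \<open>The permutation of A whose one-line form is the list w: the i-th smallest element (0-based: the element with i smaller elements)
  of A is sent to the i-th entry of w.\<close>

definition perm_of_oneline :: "'b::linorder set \<Rightarrow> 'b list \<Rightarrow> 'b \<Rightarrow> 'b" where
  "perm_of_oneline A w = (\<lambda>a. if a \<in> A then w ! card {b \<in> A. b < a} else a)"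

definition set_partitions_into :: "nat \<Rightarrow> nat \<Rightarrow> 'b set \<Rightarrow> 'b set set set" where
  "set_partitions_into m k A = {P. \<Union>P = A \<and> card P = k \<and> finite P \<and>
      (\<forall>I\<in>P. card I = m) \<and> (\<forall>I\<in>P. \<forall>J\<in>P. I \<noteq> J \<longrightarrow> I \<inter> J = {})}"

text \<open>A listing I_1,...,I_k of the blocks of a partition (ordered by their least elements;
  for even m the resulting sign does not depend on the order of the blocks).\<close>

definition blocks_list :: "'b::linorder set set \<Rightarrow> 'b set list" where
  "blocks_list P = (THE Is. set Is = P \<and> sorted_wrt (\<lambda>I J. Min I < Min J) Is)"

definition part_sign :: "'b::linorder set \<Rightarrow> 'b set list \<Rightarrow> int" where
  "part_sign A Is = sign (perm_of_oneline A (concat (map sorted_list_of_set Is)))"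

definition hpf :: "nat \<Rightarrow> nat \<Rightarrow> 'b::linorder set \<Rightarrow> ('b set \<Rightarrow> 'k::field) \<Rightarrow> 'k" where
  "hpf m k A x = (\<Sum>P\<in>set_partitions_into m k A.
       of_int (part_sign A (blocks_list P)) * (\<Prod>I\<in>P. x I))"

definition HPf :: "nat \<Rightarrow> nat \<Rightarrow> 'b::linorder set \<Rightarrow> ('b set \<Rightarrow> 'k::field) set" where
  "HPf m k B = {x \<in> ext_power m B. \<forall>A. A \<subseteq> B \<and> card A = m * k \<longrightarrow> hpf m k A x = 0}"

end

theory Submission imports Defs begin

text \<open>Expand along the block \<open>I\<close> that contains \<open>Min A\<close>. The partitions of \<open>A\<close> having \<open>I\<close> as a
  block are exactly \<open>insert I Q\<close> for the partitions \<open>Q\<close> of \<open>A - I\<close> into one block fewer. Since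
  \<open>blocks_list\<close> orders the blocks by their minima, \<open>I\<close> is listed first, so the one-line permutation
  of \<open>insert I Q\<close> is that of \<open>Q\<close> on \<open>A - I\<close> composed with the shuffle putting \<open>I\<close> in front of
  \<open>A - I\<close>. Hence hpf^(m,l+1)_A(x) is a signed sum of the terms x_I hpf^(m,l)_(A-I)(x), all of which
  vanish for x in HPf^(m,l).\<close>

lemma card_less_nth_sorted_list_of_set:
  assumes "finite S" "k < card S"
  shows "card {b \<in> S. b < sorted_list_of_set S ! k} = k"
proof -
  let ?s = "sorted_list_of_set S"
  have len: "length ?s = card S" by simp
  have "{b \<in> S. b < ?s ! k} = set (take k ?s)"
  proof (intro set_eqI iffI)
    fix b assume b: "b \<in> {b \<in> S. b < ?s ! k}"
    then have "b \<in> set ?s" using assms(1) by simp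
    then obtain i where i: "i < length ?s" "?s ! i = b" by (auto simp: in_set_conv_nth)
    have "i < k"
    proof (rule ccontr)
      assume "\<not> i < k"
      then have "?s ! k \<le> ?s ! i" using i(1) sorted_nth_mono[of ?s k i] by simp
      then show False using b i by auto
    qed
    then show "b \<in> set (take k ?s)" using i by (auto simp: in_set_conv_nth intro!: exI[of _ i])
  next
    fix b assume "b \<in> set (take k ?s)"
    then obtain i where i: "i < k" "?s ! i = b" using assms len by (auto simp: in_set_conv_nth)
    have "?s ! i < ?s ! k"
      using sorted_wrt_nth_less[of "(<)" ?s i k] i(1) assms(2) len by simp
    moreover have "b \<in> S" using i assms len by (metis nth_mem order.strict_trans set_sorted_list_of_set)
    ultimately show "b \<in> {b \<in> S. b < ?s ! k}" using i by simp
  qed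
  then show ?thesis using assms len by (simp add: distinct_card)
qed

lemma card_less_less_card:
  fixes S :: "'a::linorder set"
  assumes "finite S" "a \<in> S"
  shows "card {b \<in> S. b < a} < card S"
proof (rule psubset_card_mono)
  have "a \<notin> {b \<in> S. b < a}" by simp
  then show "{b \<in> S. b < a} \<subset> S" using assms(2) by auto
qed (use assms in simp)

lemma inj_on_card_less:
  fixes S :: "'a::linorder set"
  assumes "finite S"
  shows "inj_on (\<lambda>a. card {b \<in> S. b < a}) S"
proof (rule inj_onI)
  have mono: "card {b \<in> S. b < a} < card {b \<in> S. b < a'}" if "a \<in> S" "a < a'" for a a'
    using assms that by (intro psubset_card_mono) auto
  fix a a' assume "a \<in> S" "a' \<in> S" "card {b \<in> S. b < a} = card {b \<in> S. b < a'}"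
  then show "a = a'" using mono[of a a'] mono[of a' a] by (cases a a' rule: linorder_cases) auto
qed

lemma perm_of_oneline_permutes:
  assumes "finite A" "distinct w" "set w = A"
  shows "perm_of_oneline A w permutes A"
proof (rule bij_imp_permutes)
  let ?p = "perm_of_oneline A w"
  have len: "length w = card A" using assms distinct_card by metis
  have "inj_on ?p A"
  proof (rule inj_onI)
    fix a a' assume a: "a \<in> A" "a' \<in> A" "?p a = ?p a'"
    then have "card {b \<in> A. b < a} = card {b \<in> A. b < a'}"
      using assms(2) card_less_less_card[OF assms(1)] len
      by (simp add: perm_of_oneline_def nth_eq_iff_index_eq)
    then show "a = a'" using inj_on_card_less[OF assms(1)] a by (auto dest: inj_onD)
  qed
  moreover have "?p ` A \<subseteq> A"
    using card_less_less_card[OF assms(1)] len assms(3) by (auto simp: perm_of_oneline_def)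
  ultimately show "bij_betw ?p A A"
    using endo_inj_surj[OF assms(1)] by (simp add: bij_betw_def)
  show "\<And>a. a \<notin> A \<Longrightarrow> ?p a = a" by (simp add: perm_of_oneline_def)
qed

lemma perm_of_oneline_append:
  assumes "finite A" "distinct (u @ w)" "set (u @ w) = A"
  shows "perm_of_oneline A (u @ w) =
    perm_of_oneline (set w) w \<circ> perm_of_oneline A (u @ sorted_list_of_set (set w))"
proof
  fix a
  let ?sw = "sorted_list_of_set (set w)"
  have len: "length u + length w = card A" using assms distinct_card by fastforce
  have lw: "length w = card (set w)" using assms(2) by (simp add: distinct_card)
  show "perm_of_oneline A (u @ w) a =
    (perm_of_oneline (set w) w \<circ> perm_of_oneline A (u @ ?sw)) a"
  proof (cases "a \<in> A")
    case False
    then show ?thesis using assms(3) by (auto simp: perm_of_oneline_def)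
  next
    case True
    define j where "j = card {b \<in> A. b < a}"
    have "j < length u + length w" using card_less_less_card[OF assms(1) True] len j_def by simp
    show ?thesis
    proof (cases "j < length u")
      case True
      then have "u ! j \<notin> set w" using assms(2) by (auto dest: nth_mem)
      then show ?thesis using True \<open>a \<in> A\<close>
        by (simp add: perm_of_oneline_def j_def[symmetric] nth_append)
    next
      case False
      let ?k = "j - length u"
      have k: "?k < card (set w)" using \<open>j < length u + length w\<close> False lw by simp
      have "?sw ! ?k \<in> set w" using k by (metis nth_mem length_sorted_list_of_set finite_set set_sorted_list_of_set)
      then show ?thesis using False \<open>a \<in> A\<close> card_less_nth_sorted_list_of_set[OF finite_set k]
        by (simp add: perm_of_oneline_def j_def[symmetric] nth_append)
    qed
  qed
qed

lemma sign_perm_of_oneline_append: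
  assumes "finite A" "distinct (u @ w)" "set (u @ w) = A"
  shows "sign (perm_of_oneline A (u @ w)) =
    sign (perm_of_oneline (set w) w) * sign (perm_of_oneline A (u @ sorted_list_of_set (set w)))"
proof -
  have "perm_of_oneline (set w) w permutes set w"
    using assms(2) by (intro perm_of_oneline_permutes) auto
  moreover have "perm_of_oneline A (u @ sorted_list_of_set (set w)) permutes A"
    using assms by (intro perm_of_oneline_permutes) auto
  ultimately show ?thesis
    unfolding perm_of_oneline_append[OF assms]
    by (intro sign_compose permutes_imp_permutation[OF finite_set]
        permutes_imp_permutation[OF assms(1)])
qed

lemma inj_on_Min_disjoint:
  fixes P :: "'a::linorder set set"
  assumes "pairwise disjnt P" "\<And>J. J \<in> P \<Longrightarrow> finite J \<and> J \<noteq> {}"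
  shows "inj_on Min P"
proof (rule inj_onI)
  fix I J assume "I \<in> P" "J \<in> P" "Min I = Min J"
  then have "Min I \<in> I \<inter> J" using assms(2) by (metis IntI Min_in)
  then show "I = J" using assms(1) \<open>I \<in> P\<close> \<open>J \<in> P\<close> by (auto simp: pairwise_def disjnt_def)
qed

lemma blocks_list_eqI:
  assumes "pairwise disjnt P" "\<And>J. J \<in> P \<Longrightarrow> finite J \<and> J \<noteq> {}"
    and "set Is = P" "sorted_wrt (\<lambda>I J. Min I < Min J) Is"
  shows "blocks_list P = Is"
  unfolding blocks_list_def
proof (rule the_equality)
  show "set Is = P \<and> sorted_wrt (\<lambda>I J. Min I < Min J) Is" using assms(3,4) ..
  have inj: "inj_on Min P" using inj_on_Min_disjoint[OF assms(1,2)] .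
  fix Js assume Js: "set Js = P \<and> sorted_wrt (\<lambda>I J. Min I < Min J) Js"
  have "map Min Js = map Min Is"
    using Js assms(3,4) by (intro strict_sorted_equal) (simp_all add: sorted_wrt_map)
  then show "Js = Is" using inj Js assms(3) inj_on_map_eq_map[of Min Js Is] by simp
qed

lemma blocks_list:
  assumes "finite P" "pairwise disjnt P" "\<And>J. J \<in> P \<Longrightarrow> finite J \<and> J \<noteq> {}"
  shows "set (blocks_list P) = P" "sorted_wrt (\<lambda>I J. Min I < Min J) (blocks_list P)"
proof -
  obtain xs where xs: "set xs = P" "distinct xs" using finite_distinct_list[OF assms(1)] by blast
  let ?Is = "sort_key Min xs"
  have "inj_on Min P" using inj_on_Min_disjoint[OF assms(2,3)] .
  then have "sorted_wrt (<) (map Min ?Is)" using xs by (simp add: strict_sorted_iff distinct_map)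
  then have "sorted_wrt (\<lambda>I J. Min I < Min J) ?Is" by (simp add: sorted_wrt_map)
  moreover have "set ?Is = P" using xs by simp
  ultimately have "blocks_list P = ?Is" using blocks_list_eqI[OF assms(2,3)] by blast
  then show "set (blocks_list P) = P" "sorted_wrt (\<lambda>I J. Min I < Min J) (blocks_list P)"
    using \<open>set ?Is = P\<close> \<open>sorted_wrt _ ?Is\<close> by simp_all
qed

lemma blocks_list_insert:
  assumes "finite Q" "pairwise disjnt (insert I Q)" "\<And>J. J \<in> insert I Q \<Longrightarrow> finite J \<and> J \<noteq> {}"
    and "\<And>J. J \<in> Q \<Longrightarrow> Min I < Min J"
  shows "blocks_list (insert I Q) = I # blocks_list Q"
proof (rule blocks_list_eqI[OF assms(2,3)])
  have "pairwise disjnt Q" using assms(2) by (simp add: pairwise_insert)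
  moreover have "\<And>J. J \<in> Q \<Longrightarrow> finite J \<and> J \<noteq> {}" using assms(3) by simp
  ultimately have bl: "set (blocks_list Q) = Q" "sorted_wrt (\<lambda>I J. Min I < Min J) (blocks_list Q)"
    using blocks_list[OF assms(1)] by blast+
  show "set (I # blocks_list Q) = insert I Q" using bl(1) by simp
  show "sorted_wrt (\<lambda>I J. Min I < Min J) (I # blocks_list Q)" using bl assms(4) by simp
qed

lemma distinct_concat_sorted_lists:
  assumes "distinct Is" "pairwise disjnt (set Is)" "\<And>J. J \<in> set Is \<Longrightarrow> finite J"
  shows "distinct (concat (map sorted_list_of_set Is))"
proof (rule distinct_concat)
  have "inj_on sorted_list_of_set (set Is)"
    using assms(3) by (metis inj_onI sorted_list_of_set.set_sorted_key_list_of_set)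
  then show "distinct (map sorted_list_of_set Is)" using assms(1) by (simp add: distinct_map)
  fix ys zs assume "ys \<in> set (map sorted_list_of_set Is)" "zs \<in> set (map sorted_list_of_set Is)" "ys \<noteq> zs"
  then obtain J K where "J \<in> set Is" "K \<in> set Is" "J \<noteq> K"
    and "ys = sorted_list_of_set J" "zs = sorted_list_of_set K" by auto
  then show "set ys \<inter> set zs = {}" using assms(2,3) by (auto simp: pairwise_def disjnt_def)
qed auto

lemma part_sign_Cons:
  assumes "finite A" "I \<subseteq> A"
    and "distinct (concat (map sorted_list_of_set Is))" "set (concat (map sorted_list_of_set Is)) = A - I"
  shows "part_sign A (I # Is) = part_sign (A - I) Is *
    sign (perm_of_oneline A (sorted_list_of_set I @ sorted_list_of_set (A - I)))"
proof -
  let ?w = "concat (map sorted_list_of_set Is)"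
  have "finite I" using assms(1,2) finite_subset by blast
  then have "distinct (sorted_list_of_set I @ ?w)" "set (sorted_list_of_set I @ ?w) = A"
    using assms by auto
  from sign_perm_of_oneline_append[OF assms(1) this] show ?thesis
    unfolding part_sign_def assms(4) by simp
qed

lemma set_partitions_intoD:
  assumes "P \<in> set_partitions_into m k A" "m \<ge> 1"
  shows "finite P" "\<Union>P = A" "pairwise disjnt P" "\<And>J. J \<in> P \<Longrightarrow> finite J \<and> J \<noteq> {}"
proof -
  show "finite P" "\<Union>P = A" "pairwise disjnt P"
    using assms(1) by (auto simp: set_partitions_into_def pairwise_def disjnt_def)
  fix J assume "J \<in> P"
  then have "card J \<noteq> 0" using assms by (simp add: set_partitions_into_def)
  then show "finite J \<and> J \<noteq> {}" by (simp add: card_eq_0_iff)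
qed

lemma finite_set_partitions_into:
  assumes "finite A"
  shows "finite (set_partitions_into m k A)"
proof (rule finite_subset)
  show "set_partitions_into m k A \<subseteq> Pow (Pow A)" by (auto simp: set_partitions_into_def)
qed (use assms in simp)

lemma concat_blocks_list_set_partitions_into:
  assumes "Q \<in> set_partitions_into m k S" "m \<ge> 1"
  shows "distinct (concat (map sorted_list_of_set (blocks_list Q)))"
    and "set (concat (map sorted_list_of_set (blocks_list Q))) = S"
proof -
  note Q = set_partitions_intoD[OF assms]
  note bl = blocks_list[OF Q(1,3,4)]
  have "sorted_wrt (<) (map Min (blocks_list Q))" using bl(2) by (simp add: sorted_wrt_map)
  then have "distinct (blocks_list Q)" by (simp add: strict_sorted_iff distinct_map)
  then show "distinct (concat (map sorted_list_of_set (blocks_list Q)))"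
    using Q(3,4) bl(1) by (intro distinct_concat_sorted_lists) auto
  show "set (concat (map sorted_list_of_set (blocks_list Q))) = S"
    using Q(2,4) bl(1) by auto
qed

lemma notin_set_partitions_into_Diff:
  assumes "I \<noteq> {}" "Q \<in> set_partitions_into m k (A - I)"
  shows "I \<notin> Q"
proof
  assume "I \<in> Q"
  then have "I \<subseteq> A - I" using assms(2) by (auto simp: set_partitions_into_def)
  then show False using assms(1) by blast
qed

lemma set_partitions_into_with_block:
  assumes "I \<subseteq> A" "card I = m" "m \<ge> 1"
  shows "{P \<in> set_partitions_into m (Suc k) A. I \<in> P} = insert I ` set_partitions_into m k (A - I)"
proof (intro set_eqI iffI)
  fix P assume "P \<in> {P \<in> set_partitions_into m (Suc k) A. I \<in> P}"
  then have P: "\<Union>P = A" "card P = Suc k" "finite P" "\<forall>J\<in>P. card J = m"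
     "\<forall>J\<in>P. \<forall>K\<in>P. J \<noteq> K \<longrightarrow> J \<inter> K = {}" "I \<in> P"
    by (auto simp: set_partitions_into_def)
  then have "\<Union>(P - {I}) = A - I" by blast
  then have "P - {I} \<in> set_partitions_into m k (A - I)"
    using P by (auto simp: set_partitions_into_def)
  moreover have "P = insert I (P - {I})" using P by blast
  ultimately show "P \<in> insert I ` set_partitions_into m k (A - I)" by blast
next
  fix P assume "P \<in> insert I ` set_partitions_into m k (A - I)"
  then obtain Q where Q: "Q \<in> set_partitions_into m k (A - I)" "P = insert I Q" by blast
  then have "\<Union>Q = A - I" "card Q = k" "finite Q" "\<forall>J\<in>Q. card J = m"
     "\<forall>J\<in>Q. \<forall>K\<in>Q. J \<noteq> K \<longrightarrow> J \<inter> K = {}"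
    by (auto simp: set_partitions_into_def)
  moreover have "I \<notin> Q" using Q(1) assms by (intro notin_set_partitions_into_Diff) auto
  ultimately show "P \<in> {P \<in> set_partitions_into m (Suc k) A. I \<in> P}"
    using Q(2) assms by (auto simp: set_partitions_into_def)
qed

lemma part_sign_blocks_list_insert_Min_block:
  assumes "finite A" "I \<subseteq> A" "Min A \<in> I" "Q \<in> set_partitions_into m k (A - I)" "m \<ge> 1"
  shows "part_sign A (blocks_list (insert I Q)) = part_sign (A - I) (blocks_list Q) *
    sign (perm_of_oneline A (sorted_list_of_set I @ sorted_list_of_set (A - I)))"
proof -
  note Q = set_partitions_intoD[OF assms(4,5)]
  have I: "finite I" "I \<noteq> {}" using assms(1-3) finite_subset by blast+
  have "Min I < Min J" if "J \<in> Q" for J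
  proof -
    have "Min J \<in> A - I" using Q(2,4) that Min_in by blast
    moreover have "Min I = Min A" using Min_le[OF I(1) assms(3)] Min_antimono[OF assms(2) I(2) assms(1)] by simp
    ultimately show ?thesis using assms(1,3) Min_le[of A "Min J"] by (auto simp: order.order_iff_strict)
  qed
  moreover have "pairwise disjnt (insert I Q)"
    using Q(2,3) by (auto simp: pairwise_insert disjnt_def)
  ultimately have "blocks_list (insert I Q) = I # blocks_list Q"
    using Q(1,4) I by (intro blocks_list_insert) auto
  then show ?thesis
    using part_sign_Cons[OF assms(1,2) concat_blocks_list_set_partitions_into[OF assms(4,5)]] by simp
qed

lemma sum_set_partitions_into_by_block_containing:
  assumes "finite A" "a \<in> A"
  shows "(\<Sum>P\<in>set_partitions_into m k A. f P) =
    (\<Sum>I | I \<subseteq> A \<and> card I = m \<and> a \<in> I. \<Sum>P | P \<in> set_partitions_into m k A \<and> I \<in> P. f P)"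
proof -
  let ?Is = "{I. I \<subseteq> A \<and> card I = m \<and> a \<in> I}"
  have "f P = (\<Sum>I | I \<in> ?Is \<and> I \<in> P. f P)" if P: "P \<in> set_partitions_into m k A" for P
  proof -
    obtain J where J: "J \<in> P" "a \<in> J" using P assms(2) by (auto simp: set_partitions_into_def)
    have "{I. I \<in> ?Is \<and> I \<in> P} = {J}"
      using P J by (auto simp: set_partitions_into_def)
    then show ?thesis by simp
  qed
  then have "(\<Sum>P\<in>set_partitions_into m k A. f P) =
      (\<Sum>P\<in>set_partitions_into m k A. \<Sum>I | I \<in> ?Is \<and> I \<in> P. f P)"
    by (rule sum.cong[OF refl])
  also have "\<dots> = (\<Sum>I\<in>?Is. \<Sum>P | P \<in> set_partitions_into m k A \<and> I \<in> P. f P)"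
    using assms(1) finite_set_partitions_into by (intro sum.swap_restrict) auto
  finally show ?thesis by simp
qed

lemma hpf_Suc_expansion:
  fixes x :: "'b::linorder set \<Rightarrow> 'k::field"
  assumes "finite A" "A \<noteq> {}" "m \<ge> 1"
  shows "hpf m (Suc k) A x = (\<Sum>I | I \<subseteq> A \<and> card I = m \<and> Min A \<in> I.
    of_int (sign (perm_of_oneline A (sorted_list_of_set I @ sorted_list_of_set (A - I)))) * x I *
    hpf m k (A - I) x)"
proof -
  let ?term = "\<lambda>A P. of_int (part_sign A (blocks_list P)) * (\<Prod>J\<in>P. x J) :: 'k"
  let ?shuffle = "\<lambda>I. of_int (sign (perm_of_oneline A
    (sorted_list_of_set I @ sorted_list_of_set (A - I)))) :: 'k"
  have block_sum: "(\<Sum>P | P \<in> set_partitions_into m (Suc k) A \<and> I \<in> P. ?term A P) =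
      ?shuffle I * x I * hpf m k (A - I) x"
    if I: "I \<subseteq> A" "card I = m" "Min A \<in> I" for I
  proof -
    let ?Qs = "set_partitions_into m k (A - I)"
    have not_block: "I \<notin> Q" if "Q \<in> ?Qs" for Q
      using notin_set_partitions_into_Diff[OF _ that] I(3) by blast
    then have "inj_on (insert I) ?Qs" by (intro inj_onI) (metis insert_ident)
    moreover have "?term A (insert I Q) = ?shuffle I * x I * ?term (A - I) Q" if "Q \<in> ?Qs" for Q
      using part_sign_blocks_list_insert_Min_block[OF assms(1) I(1,3) that assms(3)] not_block[OF that]
        set_partitions_intoD(1)[OF that assms(3)]
      by (simp add: ac_simps)
    ultimately show ?thesis
      using set_partitions_into_with_block[OF I(1,2) assms(3)]
      by (simp add: sum.reindex hpf_def sum_distrib_left mult.assoc)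
  qed
  have "hpf m (Suc k) A x =
      (\<Sum>I | I \<subseteq> A \<and> card I = m \<and> Min A \<in> I.
        \<Sum>P | P \<in> set_partitions_into m (Suc k) A \<and> I \<in> P. ?term A P)"
    unfolding hpf_def by (rule sum_set_partitions_into_by_block_containing[OF assms(1) Min_in[OF assms(1,2)]])
  also have "\<dots> = (\<Sum>I | I \<subseteq> A \<and> card I = m \<and> Min A \<in> I. ?shuffle I * x I * hpf m k (A - I) x)"
    using block_sum by (intro sum.cong) auto
  finally show ?thesis .
qed

theorem lemma3p16:
  fixes B :: "'b::linorder set" and m l :: nat
  assumes "finite B" and "m \<ge> 2" and "even m" and "l \<ge> 1"
  shows "(HPf m l B :: ('b set \<Rightarrow> 'k::field) set) \<subseteq> HPf m (l + 1) B"
proof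
  fix x :: "'b set \<Rightarrow> 'k" assume "x \<in> HPf m l B"
  then have x: "x \<in> ext_power m B" "\<And>A. A \<subseteq> B \<Longrightarrow> card A = m * l \<Longrightarrow> hpf m l A x = 0"
    by (auto simp: HPf_def)
  have "hpf m (Suc l) A x = 0" if A: "A \<subseteq> B" "card A = m * Suc l" for A
  proof -
    have "finite A" "A \<noteq> {}" using A assms(1,2) finite_subset by auto
    moreover have "hpf m l (A - I) x = 0" if "I \<subseteq> A" "card I = m" for I
    proof -
      have "card (A - I) = m * l"
        using A that \<open>finite A\<close> by (simp add: card_Diff_subset finite_subset)
      then show ?thesis using x(2)[of "A - I"] A(1) by blast
    qed
    ultimately show ?thesis using assms(2) by (simp add: hpf_Suc_expansion)
  qed
  then show "x \<in> HPf m (l + 1) B" using x(1) by (simp add: HPf_def)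
qed

end
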